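(* Let $p_0,q\in\mathcal S^{d-1}$ and consider the preference dynamics with the fixed recommendation $q_t=q$ for all $t\ge 0$, i.e. $\tilde p_{t+1}=p_t+\eta_t\,(p_t^\top q)\,q$, $p_{t+1}=\tilde p_{t+1}/\|\tilde p_{t+1}\|_2$, with step sizes either constant ($\eta_t=\eta$) or decreasing ($\eta_t=\frac{\eta}{t+s}$). Then $p_t\to q$ as $t\to\infty$ if $p_0^\top q>0$, and $p_t\to -q$ if $p_0^\top q<0$. Furthermore, for every $t\ge0$, $p_t$ lies in the cone generated by $p_0$ and $\mathrm{sgn}(p_0^\top q)\,q$ (i.e. $p_t$ is a nonnegative linear combination of these two vectors). In particular, when $p_0^\top q\neq 0$, for all $t\ge 0$, \[(p_t^\top q)^{-2}=1+\gamma_t^2\big((p_0^\top q)^{-2}-1\big),\qquad \gamma_t=\begin{cases}(\eta+1)^{-t}, & \eta_t=\eta,\\[2pt] \prod_{k=0}^{\eta-1}\frac{s+k}{t+s+k}, & \eta_t=\frac{\eta}{t+s}.\end{cases}\]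
   Context: $\mathcal S^{d-1}$ denotes the unit sphere in $\mathbb{R}^d$. In the constant step-size setting $\eta>0$ is a constant; in the decreasing step-size setting $\eta$ and $s$ are positive integers. $\mathrm{sgn}$ denotes the sign function. *)

theory Defs
  imports "HOL-Analysis.Analysis"
begin

fun pref_seq :: "(nat \<Rightarrow> real) \<Rightarrow> 'a::real_inner \<Rightarrow> 'a \<Rightarrow> nat \<Rightarrow> 'a" where
  "pref_seq eta q p0 0 = p0"
| "pref_seq eta q p0 (Suc t) =
     (let pt = pref_seq eta q p0 t;
          pt' = pt + (eta t * (pt \<bullet> q)) *\<^sub>R q
      in pt' /\<^sub>R norm pt')"

end

theory Submission
  imports Defs
begin

text \<open>The update \<open>p \<mapsto> p + \<eta>\<^sub>t (p \<bullet> q) q\<close> is linear, fixes the orthogonal complement of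
  \<open>q\<close> and multiplies \<open>q\<close> by \<open>1 + \<eta>\<^sub>t\<close>. As it commutes with positive scalings, all
  normalisations can be postponed to the end, so \<open>p\<^sub>t\<close> is the normalisation of
  \<open>p\<^sub>0 + (G\<^sub>t - 1) (p\<^sub>0 \<bullet> q) q\<close> with \<open>G\<^sub>t = (1 + \<eta>\<^sub>0) \<cdots> (1 + \<eta>\<^bsub>t-1\<^esub>) = 1 / \<gamma>\<^sub>t\<close>. This vector lies
  in the cone and yields the closed formula for \<open>p\<^sub>t \<bullet> q\<close>. Both schedules have
  \<open>\<gamma>\<^sub>t \<rightarrow> 0\<close>, hence \<open>p\<^sub>t \<bullet> q \<rightarrow> sgn (p\<^sub>0 \<bullet> q)\<close>, which for unit vectors means \<open>p\<^sub>t \<rightarrow> \<plusminus>q\<close>.\<close>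

definition pref_gain :: "(nat \<Rightarrow> real) \<Rightarrow> nat \<Rightarrow> real" where
  "pref_gain eta t = (\<Prod>j<t. 1 + eta j)"

definition pref_unnormalized :: "(nat \<Rightarrow> real) \<Rightarrow> 'a::real_inner \<Rightarrow> 'a \<Rightarrow> nat \<Rightarrow> 'a" where
  "pref_unnormalized eta q p0 t = p0 + ((pref_gain eta t - 1) * (p0 \<bullet> q)) *\<^sub>R q"

lemma pref_gain_ge_1:
  assumes "\<forall>j. eta j \<ge> 0"
  shows "pref_gain eta t \<ge> 1"
  unfolding pref_gain_def using assms by (intro prod_ge_1) simp

lemma pref_gain_Suc: "pref_gain eta (Suc t) = pref_gain eta t * (1 + eta t)"
  by (simp add: pref_gain_def)

lemma inner_pref_unnormalized:
  fixes p0 q :: "'a::real_inner"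
  assumes "norm q = 1"
  shows "pref_unnormalized eta q p0 t \<bullet> q = pref_gain eta t * (p0 \<bullet> q)"
proof -
  have "q \<bullet> q = 1" using assms by (simp add: dot_square_norm)
  then show ?thesis unfolding pref_unnormalized_def by (simp add: inner_add_left algebra_simps)
qed

lemma pref_unnormalized_Suc:
  fixes p0 q :: "'a::real_inner"
  assumes "norm q = 1"
  shows "pref_unnormalized eta q p0 (Suc t) =
    pref_unnormalized eta q p0 t + (eta t * (pref_unnormalized eta q p0 t \<bullet> q)) *\<^sub>R q"
  unfolding inner_pref_unnormalized[OF assms]
  by (simp add: pref_unnormalized_def pref_gain_Suc algebra_simps)

lemma norm_pref_unnormalized_sq:
  fixes p0 q :: "'a::real_inner"
  assumes "norm p0 = 1" "norm q = 1"
  shows "(norm (pref_unnormalized eta q p0 t))\<^sup>2 = 1 + ((pref_gain eta t)\<^sup>2 - 1) * (p0 \<bullet> q)\<^sup>2"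
proof -
  have "p0 \<bullet> p0 = 1" "q \<bullet> q = 1" using assms by (simp_all add: dot_square_norm)
  then show ?thesis
    unfolding power2_norm_eq_inner pref_unnormalized_def
    by (simp add: inner_add_left inner_add_right inner_commute power2_eq_square algebra_simps)
qed

lemma norm_pref_unnormalized_ge_1:
  fixes p0 q :: "'a::real_inner"
  assumes "norm p0 = 1" "norm q = 1" "\<forall>j. eta j \<ge> 0"
  shows "norm (pref_unnormalized eta q p0 t) \<ge> 1"
proof -
  have "(pref_gain eta t)\<^sup>2 \<ge> 1"
    using pref_gain_ge_1[OF assms(3)] by (simp add: one_le_power)
  then have "(norm (pref_unnormalized eta q p0 t))\<^sup>2 \<ge> 1\<^sup>2"
    unfolding norm_pref_unnormalized_sq[OF assms(1,2)] by simp
  then show ?thesis by (rule power2_le_imp_le) simp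
qed

lemma pref_seq_eq_normalized:
  fixes p0 q :: "'a::real_inner"
  assumes "norm p0 = 1" "norm q = 1" "\<forall>j. eta j \<ge> 0"
  shows "pref_seq eta q p0 t =
    pref_unnormalized eta q p0 t /\<^sub>R norm (pref_unnormalized eta q p0 t)"
proof (induction t)
  case 0
  then show ?case using assms(1) by (simp add: pref_unnormalized_def pref_gain_def)
next
  case (Suc t)
  define P where "P = pref_unnormalized eta q p0 t"
  define c where "c = norm P"
  have "c > 0"
    using norm_pref_unnormalized_ge_1[OF assms, of t] unfolding c_def P_def by linarith
  have step: "P /\<^sub>R c + (eta t * ((P /\<^sub>R c) \<bullet> q)) *\<^sub>R q = pref_unnormalized eta q p0 (Suc t) /\<^sub>R c"
    unfolding pref_unnormalized_Suc[OF assms(2)] P_def[symmetric] by (simp add: algebra_simps)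
  have "pref_seq eta q p0 (Suc t) =
      (P /\<^sub>R c + (eta t * ((P /\<^sub>R c) \<bullet> q)) *\<^sub>R q) /\<^sub>R
      norm (P /\<^sub>R c + (eta t * ((P /\<^sub>R c) \<bullet> q)) *\<^sub>R q)"
    using Suc.IH by (simp add: Let_def P_def c_def)
  also have "\<dots> = pref_unnormalized eta q p0 (Suc t) /\<^sub>R norm (pref_unnormalized eta q p0 (Suc t))"
    unfolding step using \<open>c > 0\<close> by simp
  finally show ?case .
qed

lemma pref_seq_uminus_target: "pref_seq eta (- q) p0 = pref_seq eta q p0"
proof
  show "pref_seq eta (- q) p0 t = pref_seq eta q p0 t" for t
    by (induction t) (simp_all add: Let_def)
qed

lemma inner_pref_seq:
  fixes p0 q :: "'a::real_inner"
  assumes "norm p0 = 1" "norm q = 1" "\<forall>j. eta j \<ge> 0"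
  shows "pref_seq eta q p0 t \<bullet> q =
    pref_gain eta t * (p0 \<bullet> q) / norm (pref_unnormalized eta q p0 t)"
  unfolding pref_seq_eq_normalized[OF assms] inner_scaleR_left inner_pref_unnormalized[OF assms(2)]
  by (simp add: divide_inverse mult.commute)

lemma inverse_inner_pref_seq_sq:
  fixes p0 q :: "'a::real_inner"
  assumes "norm p0 = 1" "norm q = 1" "\<forall>j. eta j \<ge> 0" "p0 \<bullet> q \<noteq> 0"
  shows "inverse ((pref_seq eta q p0 t \<bullet> q)\<^sup>2) =
    1 + (inverse (pref_gain eta t))\<^sup>2 * (inverse ((p0 \<bullet> q)\<^sup>2) - 1)"
proof -
  have "pref_gain eta t \<ge> 1" using pref_gain_ge_1[OF assms(3)] .
  have "inverse ((pref_seq eta q p0 t \<bullet> q)\<^sup>2) =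
      (norm (pref_unnormalized eta q p0 t))\<^sup>2 / (pref_gain eta t * (p0 \<bullet> q))\<^sup>2"
    unfolding inner_pref_seq[OF assms(1-3)] by (simp add: power_divide)
  also have "\<dots> = (1 + ((pref_gain eta t)\<^sup>2 - 1) * (p0 \<bullet> q)\<^sup>2) / (pref_gain eta t * (p0 \<bullet> q))\<^sup>2"
    unfolding norm_pref_unnormalized_sq[OF assms(1,2)] ..
  also have "\<dots> = 1 + (inverse (pref_gain eta t))\<^sup>2 * (inverse ((p0 \<bullet> q)\<^sup>2) - 1)"
    using \<open>pref_gain eta t \<ge> 1\<close> assms(4) by (simp add: field_simps power2_eq_square)
  finally show ?thesis .
qed

lemma pref_seq_in_cone:
  fixes p0 q :: "'a::real_inner"
  assumes "norm p0 = 1" "norm q = 1" "\<forall>j. eta j \<ge> 0"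
  shows "\<exists>a b. a \<ge> 0 \<and> b \<ge> 0 \<and> pref_seq eta q p0 t = a *\<^sub>R p0 + b *\<^sub>R (sgn (p0 \<bullet> q) *\<^sub>R q)"
proof (intro exI conjI)
  define c where "c = norm (pref_unnormalized eta q p0 t)"
  have "c \<ge> 1" using norm_pref_unnormalized_ge_1[OF assms] unfolding c_def .
  have "pref_gain eta t \<ge> 1" using pref_gain_ge_1[OF assms(3)] .
  show "0 \<le> 1 / c" using \<open>c \<ge> 1\<close> by simp
  show "0 \<le> (pref_gain eta t - 1) * \<bar>p0 \<bullet> q\<bar> / c"
    using \<open>c \<ge> 1\<close> \<open>pref_gain eta t \<ge> 1\<close> by simp
  have "sgn (p0 \<bullet> q) * \<bar>p0 \<bullet> q\<bar> = p0 \<bullet> q" by (simp add: sgn_mult_abs)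
  then show "pref_seq eta q p0 t = (1 / c) *\<^sub>R p0 +
      ((pref_gain eta t - 1) * \<bar>p0 \<bullet> q\<bar> / c) *\<^sub>R (sgn (p0 \<bullet> q) *\<^sub>R q)"
    unfolding pref_seq_eq_normalized[OF assms] c_def[symmetric] unfolding pref_unnormalized_def
    by (simp add: scaleR_add_right divide_inverse mult.commute mult.left_commute)
qed

lemma unit_tendsto_if_inner_tendsto_1:
  fixes x :: "nat \<Rightarrow> 'a::real_inner"
  assumes "\<And>n. norm (x n) = 1" "norm q = 1" "(\<lambda>n. x n \<bullet> q) \<longlonglongrightarrow> 1"
  shows "x \<longlonglongrightarrow> q"
proof -
  have "(norm (x n - q))\<^sup>2 = 2 - 2 * (x n \<bullet> q)" for n
  proof -
    have "x n \<bullet> x n = 1" "q \<bullet> q = 1" using assms(1,2) by (simp_all add: dot_square_norm)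
    then show ?thesis
      unfolding power2_norm_eq_inner by (simp add: inner_diff_left inner_diff_right inner_commute)
  qed
  then have "norm (x n - q) = sqrt (2 - 2 * (x n \<bullet> q))" for n
    by (metis norm_ge_zero real_sqrt_unique)
  moreover have "(\<lambda>n. sqrt (2 - 2 * (x n \<bullet> q))) \<longlonglongrightarrow> sqrt (2 - 2 * 1)"
    by (intro tendsto_intros assms(3))
  ultimately have "(\<lambda>n. norm (x n - q)) \<longlonglongrightarrow> 0" by simp
  then show ?thesis by (simp only: tendsto_norm_zero_iff LIM_zero_iff)
qed

lemma pref_seq_tendsto:
  fixes p0 q :: "'a::real_inner"
  assumes "norm p0 = 1" "norm q = 1" "\<forall>j. eta j \<ge> 0" "p0 \<bullet> q > 0"
    and gain_decay: "(\<lambda>t. inverse (pref_gain eta t)) \<longlonglongrightarrow> 0"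
  shows "pref_seq eta q p0 \<longlonglongrightarrow> q"
proof (rule unit_tendsto_if_inner_tendsto_1[OF _ assms(2)])
  show "norm (pref_seq eta q p0 t) = 1" for t
  proof -
    have "norm (pref_unnormalized eta q p0 t) \<noteq> 0"
      using norm_pref_unnormalized_ge_1[OF assms(1-3), of t] by linarith
    then show ?thesis by (simp add: pref_seq_eq_normalized[OF assms(1-3)])
  qed
  define K where "K = inverse ((p0 \<bullet> q)\<^sup>2) - 1"
  have pos: "pref_seq eta q p0 t \<bullet> q > 0" for t
    unfolding inner_pref_seq[OF assms(1-3)]
    using pref_gain_ge_1[OF assms(3), of t] norm_pref_unnormalized_ge_1[OF assms(1-3), of t] assms(4)
    by (intro divide_pos_pos mult_pos_pos) auto
  have "pref_seq eta q p0 t \<bullet> q = sqrt (inverse (1 + (inverse (pref_gain eta t))\<^sup>2 * K))" for t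
  proof -
    have "(pref_seq eta q p0 t \<bullet> q)\<^sup>2 = inverse (1 + (inverse (pref_gain eta t))\<^sup>2 * K)"
      using inverse_inner_pref_seq_sq[OF assms(1-3), of t] assms(4) unfolding K_def
      by (metis inverse_inverse_eq less_irrefl)
    then show ?thesis using pos[of t] by (metis abs_of_pos real_sqrt_abs)
  qed
  moreover have "(\<lambda>t. sqrt (inverse (1 + (inverse (pref_gain eta t))\<^sup>2 * K)))
      \<longlonglongrightarrow> sqrt (inverse (1 + 0\<^sup>2 * K))"
    by (intro tendsto_intros gain_decay) simp
  ultimately show "(\<lambda>t. pref_seq eta q p0 t \<bullet> q) \<longlonglongrightarrow> 1" by simp
qed

lemma pref_seq_dynamics:
  fixes p0 q :: "'a::real_inner"
  assumes "norm p0 = 1" "norm q = 1" "\<forall>j. eta j \<ge> 0"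
    and gain_decay: "(\<lambda>t. inverse (pref_gain eta t)) \<longlonglongrightarrow> 0"
  shows "(p0 \<bullet> q > 0 \<longrightarrow> pref_seq eta q p0 \<longlonglongrightarrow> q)
    \<and> (p0 \<bullet> q < 0 \<longrightarrow> pref_seq eta q p0 \<longlonglongrightarrow> - q)
    \<and> (\<forall>t. \<exists>a b. a \<ge> 0 \<and> b \<ge> 0 \<and>
          pref_seq eta q p0 t = a *\<^sub>R p0 + b *\<^sub>R (sgn (p0 \<bullet> q) *\<^sub>R q))
    \<and> (p0 \<bullet> q \<noteq> 0 \<longrightarrow> (\<forall>t.
          inverse ((pref_seq eta q p0 t \<bullet> q)\<^sup>2)
            = 1 + (inverse (pref_gain eta t))\<^sup>2 * (inverse ((p0 \<bullet> q)\<^sup>2) - 1)))"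
proof (intro conjI impI allI)
  show "pref_seq eta q p0 \<longlonglongrightarrow> q" if "p0 \<bullet> q > 0"
    using pref_seq_tendsto[OF assms(1-3) that gain_decay] .
  show "pref_seq eta q p0 \<longlonglongrightarrow> - q" if "p0 \<bullet> q < 0"
  proof -
    have "pref_seq eta (- q) p0 \<longlonglongrightarrow> - q"
      using pref_seq_tendsto[OF assms(1) _ assms(3) _ gain_decay] assms(2) that by simp
    then show ?thesis by (simp only: pref_seq_uminus_target)
  qed
qed (use assms pref_seq_in_cone inverse_inner_pref_seq_sq in auto)

lemma pref_gain_const: "pref_gain (\<lambda>_. c) t = (1 + c) ^ t"
  by (simp add: pref_gain_def)

lemma inverse_pref_gain_harmonic:
  fixes e s :: nat
  assumes "s > 0"
  shows "inverse (pref_gain (\<lambda>t. real e / real (t + s)) t) =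
    (\<Prod>k<e. real (s + k) / real (t + s + k))"
proof -
  have "pref_gain (\<lambda>t. real e / real (t + s)) t = (\<Prod>j<t. (real s + real e + real j) / (real s + real j))"
    unfolding pref_gain_def using assms by (intro prod.cong) (auto simp: field_simps)
  also have "\<dots> = pochhammer (real s + real e) t / pochhammer (real s) t"
    by (simp add: pochhammer_prod prod_dividef atLeast0LessThan)
  finally have gain: "pref_gain (\<lambda>t. real e / real (t + s)) t =
    pochhammer (real s + real e) t / pochhammer (real s) t" .
  have rhs: "(\<Prod>k<e. real (s + k) / real (t + s + k)) = pochhammer (real s) e / pochhammer (real s + real t) e"
    by (simp add: pochhammer_prod prod_dividef atLeast0LessThan add_ac)
  have "pochhammer (real s) e * pochhammer (real s + real e) t =
      pochhammer (real s) t * pochhammer (real s + real t) e"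
    by (metis add.commute pochhammer_product')
  moreover have "pochhammer (real s + real e) t > 0" "pochhammer (real s + real t) e > 0"
    using assms by (simp_all add: pochhammer_pos)
  ultimately show ?thesis unfolding gain rhs by (simp add: field_simps)
qed

lemma harmonic_gain_decay:
  fixes e s :: nat
  assumes "e > 0"
  shows "(\<lambda>t. \<Prod>k<e. real (s + k) / real (t + s + k)) \<longlonglongrightarrow> 0"
proof (rule tendsto_sandwich)
  show "\<forall>\<^sub>F t in sequentially. 0 \<le> (\<Prod>k<e. real (s + k) / real (t + s + k))"
    by (simp add: prod_nonneg)
  have "(\<Prod>k<e. real (s + k) / real (t + s + k)) \<le> real s / real (t + s)" for t
  proof -
    have "(\<Prod>k<e. real (s + k) / real (t + s + k)) =
        real s / real (t + s) * (\<Prod>k\<in>{..<e} - {0}. real (s + k) / real (t + s + k))"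
      using assms by (subst prod.remove[of _ 0]) auto
    also have "\<dots> \<le> real s / real (t + s) * 1"
      by (intro mult_left_mono prod_le_1) auto
    finally show ?thesis by simp
  qed
  then show "\<forall>\<^sub>F t in sequentially. (\<Prod>k<e. real (s + k) / real (t + s + k)) \<le> real s / real (t + s)"
    by simp
  show "(\<lambda>t. real s / real (t + s)) \<longlonglongrightarrow> 0"
    using LIMSEQ_ignore_initial_segment[OF lim_const_over_n[of "real s"], of s] by simp
qed (rule tendsto_const)

theorem proposition1:
  fixes p0 q :: "'a::euclidean_space"
    and eta :: "nat \<Rightarrow> real" and gam :: "nat \<Rightarrow> real"
  assumes p0_sphere: "norm p0 = 1" and q_sphere: "norm q = 1"
    and steps:
      "(\<exists>\<eta>::real. \<eta> > 0 \<and> eta = (\<lambda>t. \<eta>)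
           \<and> gam = (\<lambda>t. inverse ((\<eta> + 1) ^ t)))
       \<or> (\<exists>(\<eta>::nat) (s::nat). \<eta> > 0 \<and> s > 0
           \<and> eta = (\<lambda>t. real \<eta> / real (t + s))
           \<and> gam = (\<lambda>t. \<Prod>k<\<eta>. real (s + k) / real (t + s + k)))"
  shows "(p0 \<bullet> q > 0 \<longrightarrow> pref_seq eta q p0 \<longlonglongrightarrow> q)
    \<and> (p0 \<bullet> q < 0 \<longrightarrow> pref_seq eta q p0 \<longlonglongrightarrow> - q)
    \<and> (\<forall>t. \<exists>a b. a \<ge> 0 \<and> b \<ge> 0 \<and>
          pref_seq eta q p0 t = a *\<^sub>R p0 + b *\<^sub>R (sgn (p0 \<bullet> q) *\<^sub>R q))
    \<and> (p0 \<bullet> q \<noteq> 0 \<longrightarrow> (\<forall>t.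
          inverse ((pref_seq eta q p0 t \<bullet> q)\<^sup>2)
            = 1 + (gam t)\<^sup>2 * (inverse ((p0 \<bullet> q)\<^sup>2) - 1)))"
proof -
  have "(\<forall>j. eta j \<ge> 0) \<and> gam = (\<lambda>t. inverse (pref_gain eta t)) \<and> gam \<longlonglongrightarrow> 0"
    using steps
  proof (elim disjE exE conjE)
    fix c :: real
    assume "c > 0" "eta = (\<lambda>t. c)" "gam = (\<lambda>t. inverse ((c + 1) ^ t))"
    then show ?thesis
      using LIMSEQ_inverse_realpow_zero[of "c + 1"] by (simp add: pref_gain_const add.commute)
  next
    fix e s :: nat
    assume "e > 0" "s > 0" and eta: "eta = (\<lambda>t. real e / real (t + s))"
      and gam: "gam = (\<lambda>t. \<Prod>k<e. real (s + k) / real (t + s + k))"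
    have "gam = (\<lambda>t. inverse (pref_gain eta t))"
      unfolding gam eta inverse_pref_gain_harmonic[OF \<open>s > 0\<close>] ..
    then show ?thesis
      using harmonic_gain_decay[OF \<open>e > 0\<close>, of s] gam eta by simp
  qed
  then show ?thesis using pref_seq_dynamics[OF p0_sphere q_sphere] by blast
qed

end
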